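(* Let $f:\mathbb{R}^d\to\mathbb{R}$ be convex and $G$-Lipschitz, and let $\nabla f(x)$ denote a subgradient of $f$ at $x$. Let $R>0$, $\gamma=G/R$, and $\hat\beta_k=1/(k+1)^{\overline{-1/2}}$ for $k\ge0$. Consider the dual averaging method with $x_0=0$, $s_0=0$ and, for $k\ge 0$, $$s_{k+1}=s_k+\nabla f(x_k),\qquad x_{k+1}=\arg\min_{x\in\mathbb{R}^d}\left\{\langle s_{k+1},x\rangle+\hat\beta_{k+1}\frac{\gamma}{2}\|x-x_0\|^2\right\}.$$ Then for every $n\ge 0$, $$\max_{x:\,\|x\|\le R}\left\{\frac{1}{n+1}\sum_{i=0}^{n}\langle\nabla f(x_i),x_i-x\rangle\right\}\le 2RG\,(n+2)^{\overline{-1/2}}<\frac{2RG}{\sqrt{n+1}}.$$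
   Context: Factorial powers: for real $x>0$ and real $r$ with $x+r>0$, $x^{\overline{r}}:=\Gamma(x+r)/\Gamma(x)$, where $\Gamma$ is the Gamma function. *)

theory Defs
  imports "HOL-Analysis.Analysis"
begin

text \<open>Rising factorial power with real exponent:
  x^{overline r} = Gamma(x + r) / Gamma(x), meant for x > 0 and x + r > 0.\<close>
definition fpow :: "real \<Rightarrow> real \<Rightarrow> real" where
  "fpow x r = Gamma (x + r) / Gamma x"

definition beta_hat :: "nat \<Rightarrow> real" where
  "beta_hat k = 1 / fpow (real k + 1) (-1/2)"

end

(* Writing b_k = (G/R) beta_hat_k, the iterates are x_k = -s_k / b_k, and the potential
   |s_k|^2 / (2 b_k), which is minus the optimal value of the k-th subproblem, decreases by at
   least <g_k, x_k> - |g_k|^2 / (2 b_k) per step because b_k is nondecreasing.  Summing, and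
   bounding -<s_(n+1), y> by Fenchel-Young, bounds the regret against any |y| <= R by
   (RG/2) (sum_(i<=n) 1/beta_hat_i + beta_hat_(n+1)).  The recurrence of Gamma makes
   the sum equal 2(n+1)/beta_hat_(n+1), and log-convexity of Gamma gives
   k < beta_hat_k^2 <= k + 1/2, which yields both inequalities. *)
theory Submission
  imports Defs
begin

lemma Gamma_plus1_real:
  assumes "(x::real) > 0"
  shows "Gamma (x + 1) = x * Gamma x"
  using assms by (intro Gamma_plus1) (auto elim!: nonpos_Ints_cases)

lemma Gamma_half_shift_sq_le:
  assumes "(x::real) > 0"
  shows "Gamma (x + 1/2)^2 \<le> Gamma x * Gamma (x + 1)"
proof -
  have "(1 - 1/2) *\<^sub>R x + (1/2) *\<^sub>R (x + 1) = x + 1/2"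
    by (simp add: field_simps)
  moreover have "(ln \<circ> Gamma) ((1 - 1/2) *\<^sub>R x + (1/2) *\<^sub>R (x + 1))
          \<le> (1 - 1/2) * (ln \<circ> Gamma) x + (1/2) * (ln \<circ> Gamma) (x + 1)"
    using assms by (intro convex_onD[OF log_convex_Gamma_real]) auto
  ultimately have "2 * ln (Gamma (x + 1/2)) \<le> ln (Gamma x) + ln (Gamma (x + 1))"
    by simp
  moreover have pos: "Gamma x > 0" "Gamma (x + 1) > 0" "Gamma (x + 1/2) > 0"
    using assms by auto
  ultimately have "ln (Gamma (x + 1/2)^2) \<le> ln (Gamma x * Gamma (x + 1))"
    by (simp add: ln_realpow ln_mult)
  then show ?thesis
    using pos by (simp add: ln_le_cancel_iff)
qed

text \<open>Strictness comes from applying the previous inequality at \<open>x + 1\<close> and using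
  \<open>x (x + 1) < (x + 1/2)\<^sup>2\<close>.\<close>
lemma Gamma_half_shift_sq_less:
  assumes "(x::real) > 0"
  shows "Gamma (x + 1/2)^2 < Gamma x * Gamma (x + 1)"
proof -
  have "Gamma (x + 1 + 1/2)^2 \<le> Gamma (x + 1) * Gamma (x + 1 + 1)"
    using assms by (intro Gamma_half_shift_sq_le) auto
  also have "Gamma (x + 1) * Gamma (x + 1 + 1) = x * (x + 1) * (Gamma x * Gamma (x + 1))"
    using assms by (subst Gamma_plus1_real, simp, subst (1) Gamma_plus1_real) (auto simp: ac_simps)
  also have "Gamma (x + 1 + 1/2) = (x + 1/2) * Gamma (x + 1/2)"
    using Gamma_plus1_real[of "x + 1/2"] assms by (simp add: add_ac)
  finally have "(x + 1/2)^2 * Gamma (x + 1/2)^2 \<le> x * (x + 1) * (Gamma x * Gamma (x + 1))"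
    by (simp add: power_mult_distrib)
  also have "\<dots> < (x + 1/2)^2 * (Gamma x * Gamma (x + 1))"
    using assms by (intro mult_strict_right_mono) (auto simp: power2_eq_square algebra_simps)
  finally show ?thesis
    using assms by (simp add: mult_less_cancel_left_pos)
qed

lemma fpow_minus_half_eq_Gamma: "fpow (real k + 1) (-1/2) = Gamma (real k + 1/2) / Gamma (real k + 1)"
proof -
  have "real k + 1 + -1/2 = real k + 1/2"
    by simp
  then show ?thesis
    by (simp only: fpow_def)
qed

lemma beta_hat_eq_Gamma: "beta_hat k = Gamma (real k + 1) / Gamma (real k + 1/2)"
  by (simp only: beta_hat_def fpow_minus_half_eq_Gamma divide_divide_eq_right)

lemma fpow_minus_half_eq: "fpow (real k + 1) (-1/2) = 1 / beta_hat k"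
  by (simp add: beta_hat_def)

lemma beta_hat_pos: "beta_hat k > 0"
  by (simp add: beta_hat_eq_Gamma)

lemma beta_hat_Suc: "beta_hat (Suc k) = (real k + 1) / (real k + 1/2) * beta_hat k"
proof -
  have "Gamma (real (Suc k) + 1) = (real k + 1) * Gamma (real k + 1)"
    using Gamma_plus1_real[of "real k + 1"] by (simp add: add_ac)
  moreover have "Gamma (real (Suc k) + 1/2) = (real k + 1/2) * Gamma (real k + 1/2)"
    using Gamma_plus1_real[of "real k + 1/2"] by (simp add: add_ac)
  ultimately show ?thesis
    unfolding beta_hat_eq_Gamma by simp
qed

lemma beta_hat_le_Suc: "beta_hat k \<le> beta_hat (Suc k)"
  using beta_hat_pos[of k] by (simp add: beta_hat_Suc field_simps)

lemma sum_inverse_beta_hat: "(\<Sum>i\<le>n. 1 / beta_hat i) = 2 * (real n + 1) / beta_hat (Suc n)"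
proof (induction n)
  case 0
  then show ?case
    using beta_hat_pos[of 0] by (simp add: beta_hat_Suc)
next
  case (Suc n)
  have "(\<Sum>i\<le>Suc n. 1 / beta_hat i) = 2 * (real n + 1) / beta_hat (Suc n) + 1 / beta_hat (Suc n)"
    by (simp add: Suc.IH)
  also have "\<dots> = 2 * (real n + 3/2) / beta_hat (Suc n)"
    by (simp add: add_divide_distrib[symmetric] algebra_simps)
  also have "\<dots> = 2 * (real (Suc n) + 1) / beta_hat (Suc (Suc n))"
    using beta_hat_pos[of "Suc n"]
    by (simp add: beta_hat_Suc[of "Suc n"] divide_simps; simp add: algebra_simps)
  finally show ?case .
qed

lemma beta_hat_sq_le: "beta_hat k ^ 2 \<le> real k + 1/2"
proof -
  have "real k + 1/2 + 1/2 = real k + 1"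
    by simp
  then have "Gamma (real k + 1)^2 = Gamma (real k + 1/2 + 1/2)^2"
    by (simp only:)
  also have "\<dots> \<le> Gamma (real k + 1/2) * Gamma (real k + 1/2 + 1)"
    by (intro Gamma_half_shift_sq_le) auto
  also have "\<dots> = (real k + 1/2) * Gamma (real k + 1/2)^2"
    by (subst Gamma_plus1_real) (auto simp: power2_eq_square)
  moreover have "Gamma (real k + 1/2) \<noteq> 0"
    using Gamma_real_pos[of "real k + 1/2"] by linarith
  ultimately show ?thesis
    by (simp add: beta_hat_eq_Gamma power_divide pos_divide_le_eq)
qed

lemma beta_hat_sq_gt:
  assumes "k > 0"
  shows "real k < beta_hat k ^ 2"
proof -
  have "real k * Gamma (real k + 1/2)^2 < real k * (Gamma (real k) * Gamma (real k + 1))"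
    using assms Gamma_half_shift_sq_less[of "real k"] by simp
  also have "\<dots> = Gamma (real k + 1)^2"
    using assms Gamma_plus1_real[of "real k"] by (simp add: power2_eq_square)
  moreover have "Gamma (real k + 1/2) \<noteq> 0"
    using Gamma_real_pos[of "real k + 1/2"] by linarith
  ultimately show ?thesis
    by (simp add: beta_hat_eq_Gamma power_divide pos_less_divide_eq)
qed

lemma inverse_beta_hat_Suc_less: "1 / beta_hat (Suc n) < 1 / sqrt (real n + 1)"
proof -
  have "sqrt (real n + 1) < beta_hat (Suc n)"
    using beta_hat_sq_gt[of "Suc n"] beta_hat_pos[of "Suc n"] by (intro real_less_lsqrt) auto
  then show ?thesis
    by (simp add: frac_less2)
qed

lemma sum_inverse_beta_hat_add_le:
  "(\<Sum>i\<le>n. 1 / beta_hat i) + beta_hat (Suc n) \<le> 4 * (real n + 1) / beta_hat (Suc n)"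
proof -
  have "beta_hat (Suc n) * beta_hat (Suc n) \<le> 2 * (real n + 1)"
    using beta_hat_sq_le[of "Suc n"] by (simp add: power2_eq_square)
  then have "beta_hat (Suc n) \<le> 2 * (real n + 1) / beta_hat (Suc n)"
    using beta_hat_pos[of "Suc n"] by (simp add: pos_le_divide_eq)
  moreover have "4 * (real n + 1) / beta_hat (Suc n) = 2 * (2 * (real n + 1) / beta_hat (Suc n))"
    by simp
  ultimately show ?thesis
    unfolding sum_inverse_beta_hat by linarith
qed

lemma inner_add_half_norm_sq_eq:
  fixes s y :: "'a::real_inner"
  assumes "b > 0"
  shows "s \<bullet> y + b / 2 * (norm y)\<^sup>2 = b / 2 * (norm (y + (1 / b) *\<^sub>R s))\<^sup>2 - (norm s)\<^sup>2 / (2 * b)"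
  using assms
  by (simp add: power2_norm_eq_inner inner_add_left inner_add_right inner_commute field_simps)

lemma neg_inner_le_half_norm_sq:
  fixes s y :: "'a::real_inner"
  assumes "b > 0"
  shows "- (s \<bullet> y) \<le> (norm s)\<^sup>2 / (2 * b) + b / 2 * (norm y)\<^sup>2"
proof -
  have "0 \<le> b / 2 * (norm (y + (1 / b) *\<^sub>R s))\<^sup>2"
    using assms by simp
  then show ?thesis
    using inner_add_half_norm_sq_eq[OF assms, of s y] by linarith
qed

lemma argmin_inner_add_half_norm_sq:
  fixes s z :: "'a::real_inner"
  assumes "b > 0"
    and min: "\<And>y. s \<bullet> z + b / 2 * (norm z)\<^sup>2 \<le> s \<bullet> y + b / 2 * (norm y)\<^sup>2"
  shows "z = - (1 / b) *\<^sub>R s"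
proof -
  have "s \<bullet> z + b / 2 * (norm z)\<^sup>2 \<le> s \<bullet> (- (1 / b) *\<^sub>R s) + b / 2 * (norm (- (1 / b) *\<^sub>R s))\<^sup>2"
    by (rule min)
  then have "b / 2 * (norm (z + (1 / b) *\<^sub>R s))\<^sup>2 \<le> 0"
    by (simp only: inner_add_half_norm_sq_eq[OF \<open>b > 0\<close>]) simp
  then have "z + (1 / b) *\<^sub>R s = 0"
    using assms by (simp add: mult_le_0_iff)
  then show ?thesis
    by (simp add: eq_neg_iff_add_eq_0)
qed

lemma subgradient_norm_le:
  fixes f :: "'a::real_inner \<Rightarrow> real"
  assumes subgrad: "\<And>v. f v \<ge> f u + g \<bullet> (v - u)"
    and lip: "\<And>v. f v - f u \<le> G * norm (v - u)"
    and "G \<ge> 0"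
  shows "norm g \<le> G"
proof -
  have "norm g * norm g \<le> G * norm g"
    using subgrad[of "u + g"] lip[of "u + g"] by (simp add: power2_norm_eq_inner[symmetric] power2_eq_square)
  then show ?thesis
    using \<open>G \<ge> 0\<close> by (cases "g = 0") (auto simp: mult_le_cancel_right)
qed

lemma dual_averaging_potential_step:
  fixes s d :: "'a::real_inner"
  assumes "b > 0" "b \<le> b'"
  shows "(norm (s + d))\<^sup>2 / (2 * b') \<le> (norm s)\<^sup>2 / (2 * b) - d \<bullet> (- (1 / b) *\<^sub>R s) + (norm d)\<^sup>2 / (2 * b)"
proof -
  have "(norm (s + d))\<^sup>2 / (2 * b') \<le> (norm (s + d))\<^sup>2 / (2 * b)"
    using assms by (intro divide_left_mono) auto
  also have "\<dots> = (norm s)\<^sup>2 / (2 * b) - d \<bullet> (- (1 / b) *\<^sub>R s) + (norm d)\<^sup>2 / (2 * b)"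
    using assms
    by (simp add: power2_norm_eq_inner inner_add_left inner_add_right inner_commute field_simps)
  finally show ?thesis .
qed

lemma dual_averaging_regret:
  fixes d s x :: "nat \<Rightarrow> 'a::real_inner" and b :: "nat \<Rightarrow> real"
  assumes b_pos: "\<And>k. b k > 0" and b_mono: "\<And>k. b k \<le> b (Suc k)"
    and s0: "s 0 = 0" and s_step: "\<And>k. s (Suc k) = s k + d k"
    and x_eq: "\<And>k. x k = - (1 / b k) *\<^sub>R s k"
  shows "(\<Sum>i\<le>n. d i \<bullet> (x i - y))
           \<le> (\<Sum>i\<le>n. (norm (d i))\<^sup>2 / (2 * b i)) + b (Suc n) / 2 * (norm y)\<^sup>2"
proof -
  define V where "V k = (norm (s k))\<^sup>2 / (2 * b k)" for k
  have V_step: "V (Suc k) \<le> V k - d k \<bullet> x k + (norm (d k))\<^sup>2 / (2 * b k)" for k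
    using dual_averaging_potential_step[OF b_pos[of k] b_mono[of k], of "s k" "d k"]
    by (simp add: V_def s_step x_eq)
  have V_bound: "V (Suc m) \<le> - (\<Sum>i\<le>m. d i \<bullet> x i) + (\<Sum>i\<le>m. (norm (d i))\<^sup>2 / (2 * b i))" for m
  proof (induction m)
    case 0
    then show ?case
      using V_step[of 0] by (simp add: V_def s0)
  next
    case (Suc m)
    then show ?case
      using V_step[of "Suc m"] by simp
  qed
  have "s (Suc n) = (\<Sum>i\<le>n. d i)"
    by (induction n) (simp_all add: s_step s0)
  then have "(\<Sum>i\<le>n. d i \<bullet> (x i - y)) = (\<Sum>i\<le>n. d i \<bullet> x i) - s (Suc n) \<bullet> y"
    by (simp add: inner_diff_right sum_subtractf inner_sum_left)
  also have "\<dots> \<le> (\<Sum>i\<le>n. d i \<bullet> x i) + V (Suc n) + b (Suc n) / 2 * (norm y)\<^sup>2"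
    using neg_inner_le_half_norm_sq[OF b_pos[of "Suc n"], of "s (Suc n)" y] by (simp add: V_def)
  finally show ?thesis
    using V_bound[of n] by linarith
qed

lemma dual_averaging_regret_beta_hat:
  fixes d s x :: "nat \<Rightarrow> 'a::real_inner"
  assumes "G > 0" "R > 0" "\<And>k. norm (d k) \<le> G" "norm y \<le> R"
    and s0: "s 0 = 0" and s_step: "\<And>k. s (Suc k) = s k + d k"
    and x_eq: "\<And>k. x k = - (1 / (G / R * beta_hat k)) *\<^sub>R s k"
  shows "(\<Sum>i\<le>n. d i \<bullet> (x i - y)) \<le> 2 * R * G * (real n + 1) / beta_hat (Suc n)"
proof -
  define b where "b k = G / R * beta_hat k" for k
  have b_pos: "b k > 0" for k
    using assms beta_hat_pos by (simp add: b_def)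
  have b_mono: "b k \<le> b (Suc k)" for k
    using assms beta_hat_le_Suc by (simp add: b_def divide_right_mono mult_left_mono)
  have "(\<Sum>i\<le>n. d i \<bullet> (x i - y))
          \<le> (\<Sum>i\<le>n. (norm (d i))\<^sup>2 / (2 * b i)) + b (Suc n) / 2 * (norm y)\<^sup>2"
    using b_pos b_mono s0 s_step x_eq unfolding b_def by (rule dual_averaging_regret)
  also have "\<dots> \<le> (\<Sum>i\<le>n. G\<^sup>2 / (2 * b i)) + b (Suc n) / 2 * R\<^sup>2"
    using assms b_pos
    by (intro add_mono sum_mono divide_right_mono mult_left_mono power_mono) (auto intro: less_imp_le)
  also have "\<dots> = G * R / 2 * ((\<Sum>i\<le>n. 1 / beta_hat i) + beta_hat (Suc n))"
    using assms by (simp add: b_def sum_distrib_left power2_eq_square field_simps)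
  also have "\<dots> \<le> G * R / 2 * (4 * (real n + 1) / beta_hat (Suc n))"
    using assms by (intro mult_left_mono sum_inverse_beta_hat_add_le) auto
  also have "\<dots> = 2 * R * G * (real n + 1) / beta_hat (Suc n)"
    using beta_hat_pos[of "Suc n"] by (simp add: field_simps)
  finally show ?thesis .
qed

theorem theorem8:
  fixes f :: "real ^ 'd \<Rightarrow> real"
    and g :: "real ^ 'd \<Rightarrow> real ^ 'd"
    and G R :: real
    and x s :: "nat \<Rightarrow> real ^ 'd"
    and n :: nat
  assumes conv: "convex_on UNIV f"
    and lip: "\<And>u v. \<bar>f u - f v\<bar> \<le> G * norm (u - v)"
    and Gpos: "G > 0"
    and subgrad: "\<And>u v. f v \<ge> f u + g u \<bullet> (v - u)"
    and Rpos: "R > 0"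
    and x0: "x 0 = 0"
    and s0: "s 0 = 0"
    and s_step: "\<And>k. s (Suc k) = s k + g (x k)"
    and x_step: "\<And>k y. s (Suc k) \<bullet> x (Suc k)
                     + beta_hat (Suc k) * ((G / R) / 2) * (norm (x (Suc k) - x 0))\<^sup>2
                   \<le> s (Suc k) \<bullet> y + beta_hat (Suc k) * ((G / R) / 2) * (norm (y - x 0))\<^sup>2"
  shows "(\<forall>y. norm y \<le> R \<longrightarrow>
            (1 / real (n + 1)) * (\<Sum>i\<le>n. g (x i) \<bullet> (x i - y))
              \<le> 2 * R * G * fpow (real n + 2) (-1/2))
         \<and> 2 * R * G * fpow (real n + 2) (-1/2) < 2 * R * G / sqrt (real n + 1)"
proof -
  have g_bound: "norm (g u) \<le> G" for u
  proof (rule subgradient_norm_le)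
    show "f v - f u \<le> G * norm (v - u)" for v
      using lip[of v u] by linarith
  qed (use subgrad Gpos in auto)
  have x_eq: "x k = - (1 / (G / R * beta_hat k)) *\<^sub>R s k" for k
  proof (cases k)
    case 0
    then show ?thesis
      using x0 s0 by simp
  next
    case (Suc j)
    have "G / R * beta_hat (Suc j) > 0"
      using Gpos Rpos beta_hat_pos by simp
    then show ?thesis
      unfolding Suc
      by (rule argmin_inner_add_half_norm_sq) (use x_step[of j] x0 in \<open>simp add: mult_ac\<close>)
  qed
  have regret: "(\<Sum>i\<le>n. g (x i) \<bullet> (x i - y)) \<le> 2 * R * G * (real n + 1) / beta_hat (Suc n)"
    if "norm y \<le> R" for y
    using Gpos Rpos g_bound that s0 s_step x_eq by (rule dual_averaging_regret_beta_hat)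
  have "real n + 2 = real (Suc n) + 1"
    by simp
  then have fpow_eq: "fpow (real n + 2) (-1/2) = 1 / beta_hat (Suc n)"
    by (simp only: fpow_minus_half_eq)
  have "2 * R * G * (1 / beta_hat (Suc n)) < 2 * R * G / sqrt (real n + 1)"
    using mult_strict_left_mono[OF inverse_beta_hat_Suc_less, of "2 * R * G"] Gpos Rpos by simp
  moreover have "1 / real (n + 1) * (\<Sum>i\<le>n. g (x i) \<bullet> (x i - y)) \<le> 2 * R * G * (1 / beta_hat (Suc n))"
    if "norm y \<le> R" for y
    using regret[OF that] by (simp add: field_simps)
  ultimately show ?thesis
    unfolding fpow_eq by blast
qed

end
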